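(* Let $s\in(0,2]$, $P$ a finite set of $n$ points in $(\mathbb{R}^d,\ell_s)$ and $\varepsilon>0$. For any query point $q$, the exact nearest neighbor query procedure described in the context returns a point of $\mathrm{NN}_P(q)$ with high probability.
   Context: $\mathrm{d}$ is the $\ell_s$ distance; $\mathrm{d}(x,P)=\min\{\mathrm{d}(x,p):p\in P\setminus\{x\}\}$; $\mathrm{NN}_P(x)$ is the set of $p\in P\setminus\{x\}$ with $\mathrm{d}(x,p)=\mathrm{d}(x,P)$; $N_P(x,R)$ is the set of $p\in P\setminus\{x\}$ with $\mathrm{d}(x,p)\le R$. Ingredients. (1) An $\varepsilon$-approximate nearest neighbor structure $\mathcal{T}(P,\varepsilon)$ (Har-Peled's tree of locality-sensitive hashing $(r,\varepsilon)$-PLEB structures) which fixes at preprocessing a finite set of candidate radii and, given $q$, outputs one of these radii $r$ satisfying $\mathrm{d}(q,P)\le r\le(1+\varepsilon)\mathrm{d}(q,P)$ with probability at least $1-1/n$. (2) For each candidate radius $r$, a structure $\mathcal{A}'(P,r,\varepsilon)$ which, given $q$, returns a set equal to $N_P(q,r)$ with high probability (it is the lifted locality-sensitive hashing structure for exhaustive $r$-PLEB: lift $P$ to $\mathbb{R}^{d+1}$ with last coordinate $0$, lift $q$ with last coordinate $r/((1+\varepsilon)^s-1)^{1/s}$, and report all lifted data points within distance $r(1+\frac{1}{(1+\varepsilon)^s-1})^{1/s}$ of the lifted query among those colliding with it in hash tables built from $s$-stable hash functions). Query procedure: (1) answer an $\varepsilon$-NN query with $\mathcal{T}(P,\varepsilon)$,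 obtaining $r$; (2) answer the exhaustive $r$-PLEB query with $\mathcal{A}'(P,r,\varepsilon)$, obtaining a set $S$; (3) return the point of $S$ closest to $q$, or an arbitrary point of $P$ if $S=\emptyset$. *)

theory Defs
  imports "HOL-Probability.Probability"
begin

definition ls_dist :: "real \<Rightarrow> real^'d \<Rightarrow> real^'d \<Rightarrow> real" where
  "ls_dist s x y = (\<Sum>i\<in>UNIV. \<bar>x$i - y$i\<bar> powr s) powr (1/s)"

definition ls_setdist :: "real \<Rightarrow> real^'d \<Rightarrow> (real^'d) set \<Rightarrow> real" where
  "ls_setdist s x P = Min (ls_dist s x ` (P - {x}))"

definition NN_set :: "real \<Rightarrow> (real^'d) set \<Rightarrow> real^'d \<Rightarrow> (real^'d) set" where
  "NN_set s P x = {p \<in> P - {x}. ls_dist s x p = ls_setdist s x P}"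

definition N_ball :: "real \<Rightarrow> (real^'d) set \<Rightarrow> real^'d \<Rightarrow> real \<Rightarrow> (real^'d) set" where
  "N_ball s P x R = {p \<in> P - {x}. ls_dist s x p \<le> R}"

end

theory Submission
  imports Defs
begin

text \<open>If the approximate nearest neighbour structure returns a radius \<open>r \<ge> d(q,P)\<close>, every exact
  nearest neighbour lies in the ball \<open>N_P(q,r)\<close>; so when the PLEB structure reports exactly
  this ball, its point closest to \<open>q\<close> is an exact nearest neighbour. Summing over the finitely
  many candidate radii, and using that the two structures fail independently, the probability
  of this event is at least \<open>(1 - 1/n)(1 - \<delta>)\<close>.\<close>

lemma ls_setdist_le:
  assumes "finite P" "p \<in> P - {q}"
  shows "ls_setdist s q P \<le> ls_dist s q p"
  unfolding ls_setdist_def using assms by (intro Min_le) auto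

lemma ls_setdist_attained:
  assumes "finite P" "P - {q} \<noteq> {}"
  obtains p where "p \<in> P - {q}" "ls_dist s q p = ls_setdist s q P"
proof -
  have "ls_setdist s q P \<in> ls_dist s q ` (P - {q})"
    unfolding ls_setdist_def using assms by (intro Min_in) auto
  then obtain p where "p \<in> P - {q}" "ls_setdist s q P = ls_dist s q p" ..
  thus ?thesis by (intro that) simp_all
qed

lemma NN_set_subset_N_ball:
  assumes "ls_setdist s q P \<le> r"
  shows "NN_set s P q \<subseteq> N_ball s P q r"
  using assms unfolding NN_set_def N_ball_def by auto

lemma closest_in_N_ball_in_NN_set:
  assumes "finite P" "P - {q} \<noteq> {}" "ls_setdist s q P \<le> r"
    and x: "x \<in> N_ball s P q r" and closest: "\<forall>y\<in>N_ball s P q r. ls_dist s q x \<le> ls_dist s q y"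
  shows "x \<in> NN_set s P q"
proof -
  obtain p where p: "p \<in> P - {q}" "ls_dist s q p = ls_setdist s q P"
    using ls_setdist_attained assms(1,2) by blast
  have "p \<in> N_ball s P q r"
    using p NN_set_subset_N_ball[OF assms(3)] unfolding NN_set_def by auto
  hence "ls_dist s q x \<le> ls_setdist s q P" using closest p(2) by auto
  moreover have "x \<in> P - {q}" using x unfolding N_ball_def by auto
  ultimately show ?thesis
    using ls_setdist_le[OF assms(1)] unfolding NN_set_def by (auto intro: antisym)
qed

lemma (in prob_space) prob_UN_Int_indep_ge:
  assumes "finite G" "disjoint_family_on R G"
    and events: "\<And>\<rho>. \<rho> \<in> G \<Longrightarrow> R \<rho> \<in> events" "\<And>\<rho>. \<rho> \<in> G \<Longrightarrow> A \<rho> \<in> events"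
    and indep: "\<And>\<rho>. \<rho> \<in> G \<Longrightarrow> prob (R \<rho> \<inter> A \<rho>) = prob (R \<rho>) * prob (A \<rho>)"
    and A_ge: "\<And>\<rho>. \<rho> \<in> G \<Longrightarrow> c \<le> prob (A \<rho>)"
    and R_ge: "t \<le> prob (\<Union>\<rho>\<in>G. R \<rho>)" and "0 \<le> t"
  shows "t * c \<le> prob (\<Union>\<rho>\<in>G. R \<rho> \<inter> A \<rho>)"
proof -
  have disj: "disjoint_family_on (\<lambda>\<rho>. R \<rho> \<inter> A \<rho>) G"
    using assms(2) unfolding disjoint_family_on_def by auto
  have "prob (\<Union>\<rho>\<in>G. R \<rho>) * c = (\<Sum>\<rho>\<in>G. prob (R \<rho>) * c)"
    using finite_measure_finite_Union[OF assms(1) _ assms(2)] events(1)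
    by (simp add: sum_distrib_right subset_eq)
  also have "\<dots> \<le> (\<Sum>\<rho>\<in>G. prob (R \<rho>) * prob (A \<rho>))"
    using A_ge by (intro sum_mono mult_left_mono) auto
  also have "\<dots> = prob (\<Union>\<rho>\<in>G. R \<rho> \<inter> A \<rho>)"
    using finite_measure_finite_Union[OF assms(1) _ disj] events indep by (auto simp: subset_eq)
  finally have union_bound: "prob (\<Union>\<rho>\<in>G. R \<rho>) * c \<le> prob (\<Union>\<rho>\<in>G. R \<rho> \<inter> A \<rho>)" .
  show ?thesis
  proof (cases "0 \<le> c")
    case True
    thus ?thesis using union_bound R_ge mult_right_mono by fastforce
  next
    case False
    hence "t * c \<le> 0" using \<open>0 \<le> t\<close> by (simp add: mult_nonneg_nonpos)
    thus ?thesis using measure_nonneg[of M] by (rule order_trans)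
  qed
qed

theorem lemma4:
  fixes s \<epsilon> \<delta> :: real and n :: nat
    and P :: "(real^'d) set" and q :: "real^'d"
    and M :: "'w measure"
    and Rad :: "real set"
    and rad :: "'w \<Rightarrow> real"
    and Sfun :: "real \<Rightarrow> 'w \<Rightarrow> (real^'d) set"
    and out :: "'w \<Rightarrow> real^'d"
  assumes s_pos: "0 < s" and s_le: "s \<le> 2"
    and finP: "finite P" and cardP: "card P = n" and nonempty: "P - {q} \<noteq> {}"
    and eps: "0 < \<epsilon>"
    and M: "prob_space M"
    and Rad_fin: "finite Rad"
    and rad_in: "\<forall>\<omega>\<in>space M. rad \<omega> \<in> Rad"
    and rad_meas: "\<forall>\<rho>\<in>Rad. {\<omega>\<in>space M. rad \<omega> = \<rho>} \<in> sets M"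
    and S_meas: "\<forall>\<rho>\<in>Rad. {\<omega>\<in>space M. Sfun \<rho> \<omega> = N_ball s P q \<rho>} \<in> sets M"
    and T_good: "measure M {\<omega>\<in>space M. ls_setdist s q P \<le> rad \<omega>
                     \<and> rad \<omega> \<le> (1 + \<epsilon>) * ls_setdist s q P} \<ge> 1 - 1 / real n"
    and delta: "0 \<le> \<delta>"
    and A_good: "\<forall>\<rho>\<in>Rad. measure M {\<omega>\<in>space M. Sfun \<rho> \<omega> = N_ball s P q \<rho>} \<ge> 1 - \<delta>"
    and indep: "\<forall>\<rho>\<in>Rad.
        measure M ({\<omega>\<in>space M. rad \<omega> = \<rho>} \<inter> {\<omega>\<in>space M. Sfun \<rho> \<omega> = N_ball s P q \<rho>})
        = measure M {\<omega>\<in>space M. rad \<omega> = \<rho>} * measure M {\<omega>\<in>space M. Sfun \<rho> \<omega> = N_ball s P q \<rho>}"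
    and out_def: "\<forall>\<omega>\<in>space M.
        (Sfun (rad \<omega>) \<omega> \<noteq> {} \<longrightarrow> out \<omega> \<in> Sfun (rad \<omega>) \<omega>
            \<and> (\<forall>y\<in>Sfun (rad \<omega>) \<omega>. ls_dist s q (out \<omega>) \<le> ls_dist s q y))
      \<and> (Sfun (rad \<omega>) \<omega> = {} \<longrightarrow> out \<omega> \<in> P)"
  shows "\<exists>E\<in>sets M. E \<subseteq> {\<omega>\<in>space M. out \<omega> \<in> NN_set s P q}
           \<and> measure M E \<ge> (1 - 1 / real n) * (1 - \<delta>)"
proof -
  interpret prob_space M by (rule M)
  define G where "G = {\<rho>\<in>Rad. ls_setdist s q P \<le> \<rho> \<and> \<rho> \<le> (1 + \<epsilon>) * ls_setdist s q P}"
  define R where "R \<rho> = {\<omega>\<in>space M. rad \<omega> = \<rho>}" for \<rho>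
  define A where "A \<rho> = {\<omega>\<in>space M. Sfun \<rho> \<omega> = N_ball s P q \<rho>}" for \<rho>
  define E where "E = (\<Union>\<rho>\<in>G. R \<rho> \<inter> A \<rho>)"
  have "E \<in> sets M"
    unfolding E_def R_def A_def G_def using Rad_fin rad_meas S_meas by (intro sets.finite_UN) auto
  moreover have "E \<subseteq> {\<omega>\<in>space M. out \<omega> \<in> NN_set s P q}"
  proof
    fix \<omega> assume "\<omega> \<in> E"
    then obtain \<rho> where \<rho>: "\<rho> \<in> G" "\<omega> \<in> space M" "rad \<omega> = \<rho>" "Sfun \<rho> \<omega> = N_ball s P q \<rho>"
      unfolding E_def R_def A_def by auto
    have radius: "ls_setdist s q P \<le> \<rho>" using \<rho>(1) unfolding G_def by simp
    obtain p where "p \<in> P - {q}" "ls_dist s q p = ls_setdist s q P"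
      using ls_setdist_attained[OF finP nonempty] .
    hence "p \<in> Sfun (rad \<omega>) \<omega>" using \<rho>(3,4) radius unfolding N_ball_def by simp
    hence "out \<omega> \<in> N_ball s P q \<rho> \<and> (\<forall>y\<in>N_ball s P q \<rho>. ls_dist s q (out \<omega>) \<le> ls_dist s q y)"
      using out_def \<rho>(2-4) by (metis empty_iff)
    thus "\<omega> \<in> {\<omega>\<in>space M. out \<omega> \<in> NN_set s P q}"
      using closest_in_N_ball_in_NN_set[OF finP nonempty radius] \<rho>(2) by blast
  qed
  moreover have "(1 - 1 / real n) * (1 - \<delta>) \<le> prob E"
    unfolding E_def
  proof (rule prob_UN_Int_indep_ge)
    show "finite G" using Rad_fin unfolding G_def by simp
    show "disjoint_family_on R G" unfolding disjoint_family_on_def R_def by blast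
    have "G \<subseteq> Rad" unfolding G_def by blast
    thus "\<And>\<rho>. \<rho> \<in> G \<Longrightarrow> R \<rho> \<in> events" "\<And>\<rho>. \<rho> \<in> G \<Longrightarrow> A \<rho> \<in> events"
      "\<And>\<rho>. \<rho> \<in> G \<Longrightarrow> prob (R \<rho> \<inter> A \<rho>) = prob (R \<rho>) * prob (A \<rho>)"
      "\<And>\<rho>. \<rho> \<in> G \<Longrightarrow> 1 - \<delta> \<le> prob (A \<rho>)"
      using rad_meas S_meas indep A_good unfolding R_def A_def by blast+
    have "{\<omega>\<in>space M. ls_setdist s q P \<le> rad \<omega> \<and> rad \<omega> \<le> (1 + \<epsilon>) * ls_setdist s q P}
        = (\<Union>\<rho>\<in>G. R \<rho>)"
      unfolding G_def R_def using rad_in by auto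
    thus "1 - 1 / real n \<le> prob (\<Union>\<rho>\<in>G. R \<rho>)" using T_good by simp
    have "card P \<noteq> 0" using finP nonempty by auto
    thus "0 \<le> 1 - 1 / real n" using cardP by simp
  qed
  ultimately show ?thesis by (intro bexI[of _ E] conjI)
qed

end
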